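(* Let $G$ be a nearest point graph on $n=pq$ vertices with at least one edge. Then $\rho(G)$ is separable in $\mathbb{C}^p_A\otimes\mathbb{C}^q_B$ if and only if $\Delta(G)=\Delta(G^{\Gamma_B})$.
   Context: A nearest point graph: consider a rectangular lattice of $pq$ points in $p$ rows and $q$ columns, adjacent points in a row or column at distance $1$; the vertex in row $i$, column $j$ is labelled $u_iw_j$. A nearest point graph is a simple graph on these vertices all of whose edges join points at Euclidean distance $1$ or $\sqrt2$, i.e. every edge $\{u_iw_j,u_{i'}w_{j'}\}$ satisfies $(i-i')^2+(j-j')^2\in\{1,2\}$. For a simple graph $G=(V,E)$: $M(G)$ is the adjacency matrix, $\Delta(G)$ the diagonal degree matrix, $L(G)=\Delta(G)-M(G)$, and $\rho(G)=\frac{1}{2|E|}L(G)$. Vertex $u_iw_j$ is identified with $|u_i\rangle\otimes|w_j\rangle$, where $\{|u_i\rangle\}$, $\{|w_j\rangle\}$ are orthonormal bases of $\mathbb{C}^p_A$, $\mathbb{C}^q_B$. The partial transpose $G^{\Gamma_B}=(V,E')$ has $\{u_iw_j,u_kw_l\}\in E'$ iff $\{u_iw_l,u_kw_j\}\in E$. Separable means a convex combination of product states. *)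

theory Defs
  imports Complex_Main
begin

text \<open>Vertices u_i w_j are pairs (i,j) with i < p (row), j < q (column).
  A simple graph is given by its edge set: a set of 2-element vertex sets.\<close>

type_synonym vertex = "nat \<times> nat"

definition grid :: "nat \<Rightarrow> nat \<Rightarrow> vertex set" where
  "grid p q = {..<p} \<times> {..<q}"

definition simple_graph_on :: "vertex set \<Rightarrow> vertex set set \<Rightarrow> bool" where
  "simple_graph_on V E \<longleftrightarrow> (\<forall>e\<in>E. \<exists>u v. u \<noteq> v \<and> u \<in> V \<and> v \<in> V \<and> e = {u, v})"

definition nearest_point_graph :: "nat \<Rightarrow> nat \<Rightarrow> vertex set set \<Rightarrow> bool" where
  "nearest_point_graph p q E \<longleftrightarrow> simple_graph_on (grid p q) E \<and>
     (\<forall>i j i' j'. {(i, j), (i', j')} \<in> E \<longrightarrow>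
        (int i - int i')^2 + (int j - int j')^2 \<in> {1, 2})"

definition degree :: "vertex set set \<Rightarrow> vertex \<Rightarrow> nat" where
  "degree E u = card {v. {u, v} \<in> E}"

definition adj_matrix :: "vertex set set \<Rightarrow> vertex \<Rightarrow> vertex \<Rightarrow> complex" where
  "adj_matrix E u v = (if {u, v} \<in> E then 1 else 0)"

definition degree_matrix :: "vertex set set \<Rightarrow> vertex \<Rightarrow> vertex \<Rightarrow> complex" where
  "degree_matrix E u v = (if u = v then of_nat (degree E u) else 0)"

definition laplacian :: "vertex set set \<Rightarrow> vertex \<Rightarrow> vertex \<Rightarrow> complex" where
  "laplacian E u v = degree_matrix E u v - adj_matrix E u v"

definition rho :: "vertex set set \<Rightarrow> vertex \<Rightarrow> vertex \<Rightarrow> complex" where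
  "rho E u v = laplacian E u v / of_nat (2 * card E)"

definition ptrans_B :: "vertex set set \<Rightarrow> vertex set set" where
  "ptrans_B E = {{(i, j), (k, l)} | i j k l. {(i, l), (k, j)} \<in> E}"

definition density_matrix :: "nat \<Rightarrow> (nat \<Rightarrow> nat \<Rightarrow> complex) \<Rightarrow> bool" where
  "density_matrix n A \<longleftrightarrow>
     (\<forall>i<n. \<forall>j<n. A j i = cnj (A i j)) \<and>
     (\<forall>x :: nat \<Rightarrow> complex. 0 \<le> Re (\<Sum>i<n. \<Sum>j<n. cnj (x i) * A i j * x j)) \<and>
     (\<Sum>i<n. A i i) = 1"

text \<open>Separable in C^p_A \<otimes> C^q_B: a (finite) convex combination of product states.
  The entry of the pq x pq matrix at row u_i w_j, column u_i' w_j' is rho (i,j) (i',j').\<close>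
definition separable :: "nat \<Rightarrow> nat \<Rightarrow> (vertex \<Rightarrow> vertex \<Rightarrow> complex) \<Rightarrow> bool" where
  "separable p q \<rho> \<longleftrightarrow>
     (\<exists>m (w :: nat \<Rightarrow> real) A B.
        (\<forall>k<m. 0 \<le> w k \<and> density_matrix p (A k) \<and> density_matrix q (B k)) \<and>
        (\<Sum>k<m. w k) = 1 \<and>
        (\<forall>i<p. \<forall>j<q. \<forall>i'<p. \<forall>j'<q.
           \<rho> (i, j) (i', j') = (\<Sum>k<m. complex_of_real (w k) * A k i i' * B k j j')))"

end

(*
  For a product state A (x) B, the quadratic form of the partial transpose at the vector
  1 + t e_v is the quadratic form at (1, t) of the entrywise product of two positive semidefinite
  2 x 2 matrices (Gram matrices of A and B on 1 and e_v), hence nonnegative; by linearity the same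
  holds for every separable state. For rho(G) the partial transpose of the Laplacian is
  Delta(G) - M(G^Gamma_B), whose form at 1 + t e_v is 2 t (d(v) - d'(v)) + t^2 d(v), so
  separability forces d(v) = d'(v) for the degrees d, d' in G and G^Gamma_B.

  In a nearest point graph, a pair of vertices on which G and G^Gamma_B disagree is a diagonal of
  a unit square. At the lower corner v of such a square with minimal coordinate sum, the opposite
  corner is the only vertex on which the neighbourhoods of v in G and G^Gamma_B differ, so the
  degrees differ. Hence equal degrees force G = G^Gamma_B.

  Conversely, if G = G^Gamma_B then the arcs of G are closed under ((a,b),(c,d)) |-> ((a,d),(c,b)),
  and L(G) is a sum of the pairs
    (e_ab - e_cd)(e_ab - e_cd)^T + (e_ad - e_cb)(e_ad - e_cb)^T
      = 1/2 (f f^T (x) g' g'^T + f' f'^T (x) g g^T)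
  with f, f' = e_a +- e_c and g, g' = e_b +- e_d, each a nonnegative combination of product states.
*)

theory Submission
  imports Defs
begin

section \<open>Graphs on the grid and the partial transpose\<close>

lemma simple_graph_on_edgeD:
  assumes "simple_graph_on V E" "{x, y} \<in> E"
  shows "x \<in> V" "y \<in> V" "x \<noteq> y"
  using assms unfolding simple_graph_on_def by (auto simp: doubleton_eq_iff)

lemma simple_graph_on_edgeE:
  assumes "simple_graph_on V E" "e \<in> E"
  obtains u v where "u \<noteq> v" "u \<in> V" "v \<in> V" "e = {u, v}"
  using assms unfolding simple_graph_on_def by (elim ballE exE conjE) auto

lemma simple_graph_on_finite:
  assumes "simple_graph_on V E" "finite V"
  shows "finite E"
proof (rule finite_subset)
  show "E \<subseteq> Pow V"
    using assms(1) unfolding simple_graph_on_def by auto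
qed (use assms(2) in simp)

lemma finite_grid: "finite (grid p q)"
  by (simp add: grid_def)

lemma mem_ptrans_B: "{v, w} \<in> ptrans_B E \<longleftrightarrow> {(fst v, snd w), (fst w, snd v)} \<in> E"
proof
  assume "{v, w} \<in> ptrans_B E"
  then obtain i j k l where "{v, w} = {(i, j), (k, l)}" "{(i, l), (k, j)} \<in> E"
    unfolding ptrans_B_def by blast
  then show "{(fst v, snd w), (fst w, snd v)} \<in> E"
    by (auto simp: doubleton_eq_iff insert_commute)
next
  assume "{(fst v, snd w), (fst w, snd v)} \<in> E"
  then show "{v, w} \<in> ptrans_B E"
    unfolding ptrans_B_def by (intro CollectI exI[of _ "fst v"] exI[of _ "snd v"] exI[of _ "fst w"] exI[of _ "snd w"]) auto
qed

lemma simple_graph_on_ptrans_B: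
  assumes "simple_graph_on (grid p q) E"
  shows "simple_graph_on (grid p q) (ptrans_B E)"
  unfolding simple_graph_on_def
proof
  fix e assume "e \<in> ptrans_B E"
  then obtain i j k l where e: "e = {(i, j), (k, l)}" and "{(i, l), (k, j)} \<in> E"
    unfolding ptrans_B_def by blast
  then have "(i, l) \<in> grid p q" "(k, j) \<in> grid p q" "(i, l) \<noteq> (k, j)"
    using simple_graph_on_edgeD[OF assms] by blast+
  with e show "\<exists>u v. u \<noteq> v \<and> u \<in> grid p q \<and> v \<in> grid p q \<and> e = {u, v}"
    unfolding grid_def by auto
qed

lemma adj_matrix_sym: "adj_matrix E X Y = adj_matrix E Y X"
  by (simp add: adj_matrix_def insert_commute)

lemma degree_matrix_sym: "degree_matrix E X Y = degree_matrix E Y X"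
  by (simp add: degree_matrix_def)

lemma sum_adj_matrix_row:
  assumes "simple_graph_on V E" "finite V"
  shows "(\<Sum>Y\<in>V. adj_matrix E X Y) = of_nat (degree E X)"
proof -
  have "{Y \<in> V. {X, Y} \<in> E} = {Y. {X, Y} \<in> E}"
    using simple_graph_on_edgeD(2)[OF assms(1)] by blast
  then show ?thesis
    using assms(2) by (simp add: adj_matrix_def degree_def flip: sum.inter_filter)
qed

lemma sum_degree_matrix_row:
  assumes "finite V" "X \<in> V"
  shows "(\<Sum>Y\<in>V. degree_matrix E X Y) = of_nat (degree E X)"
  using assms by (simp add: degree_matrix_def)

lemma laplacian_row_sum:
  assumes "simple_graph_on V E" "finite V" "X \<in> V"
  shows "(\<Sum>Y\<in>V. laplacian E X Y) = 0"
  using assms by (simp add: laplacian_def sum_subtractf sum_adj_matrix_row sum_degree_matrix_row)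

definition mat_ptrans_B :: "('a \<times> 'b \<Rightarrow> 'a \<times> 'b \<Rightarrow> 'c) \<Rightarrow> 'a \<times> 'b \<Rightarrow> 'a \<times> 'b \<Rightarrow> 'c" where
  "mat_ptrans_B M X Y = M (fst X, snd Y) (fst Y, snd X)"

lemma laplacian_ptrans_B:
  "mat_ptrans_B (laplacian E) X Y = degree_matrix E X Y - adj_matrix (ptrans_B E) X Y"
proof -
  have "(fst X, snd Y) = (fst Y, snd X) \<longleftrightarrow> X = Y"
    by (auto simp: prod_eq_iff)
  then show ?thesis
    by (simp add: mat_ptrans_B_def laplacian_def degree_matrix_def adj_matrix_def mem_ptrans_B)
qed

lemma sum_mat_ptrans_B:
  fixes M :: "'a \<times> 'b \<Rightarrow> 'a \<times> 'b \<Rightarrow> 'c::comm_monoid_add"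
  shows "(\<Sum>X\<in>S \<times> T. \<Sum>Y\<in>S \<times> T. mat_ptrans_B M X Y) = (\<Sum>X\<in>S \<times> T. \<Sum>Y\<in>S \<times> T. M X Y)"
proof -
  define \<tau> :: "('a \<times> 'b) \<times> ('a \<times> 'b) \<Rightarrow> ('a \<times> 'b) \<times> ('a \<times> 'b)"
    where "\<tau> XY = ((fst (fst XY), snd (snd XY)), (fst (snd XY), snd (fst XY)))" for XY
  have "(\<Sum>XY\<in>(S \<times> T) \<times> (S \<times> T). M (fst (\<tau> XY)) (snd (\<tau> XY)))
      = (\<Sum>XY\<in>(S \<times> T) \<times> (S \<times> T). M (fst XY) (snd XY))"
    by (rule sum.reindex_bij_witness[of _ \<tau> \<tau>]) (auto simp: \<tau>_def)
  then show ?thesis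
    by (simp add: sum.cartesian_product case_prod_unfold mat_ptrans_B_def \<tau>_def)
qed

section \<open>Nonnegative combinations of product states\<close>

definition sep_combination :: "nat \<Rightarrow> nat \<Rightarrow> (vertex \<Rightarrow> vertex \<Rightarrow> complex) \<Rightarrow> real \<Rightarrow> bool" where
  "sep_combination p q \<rho> t \<longleftrightarrow>
     (\<exists>m (w :: nat \<Rightarrow> real) A B.
        (\<forall>k<m. 0 \<le> w k \<and> density_matrix p (A k) \<and> density_matrix q (B k)) \<and>
        (\<Sum>k<m. w k) = t \<and>
        (\<forall>i<p. \<forall>j<q. \<forall>i'<p. \<forall>j'<q.
           \<rho> (i, j) (i', j') = (\<Sum>k<m. complex_of_real (w k) * A k i i' * B k j j')))"

lemma separable_iff_sep_combination: "separable p q \<rho> \<longleftrightarrow> sep_combination p q \<rho> 1"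
  unfolding separable_def sep_combination_def by simp

lemma sep_combinationI:
  fixes m :: nat
  assumes "\<forall>k<m. 0 \<le> w k \<and> density_matrix p (A k) \<and> density_matrix q (B k)"
    and "(\<Sum>k<m. w k) = t"
    and "\<And>i j i' j'. i < p \<Longrightarrow> j < q \<Longrightarrow> i' < p \<Longrightarrow> j' < q \<Longrightarrow>
           \<rho> (i, j) (i', j') = (\<Sum>k<m. complex_of_real (w k) * A k i i' * B k j j')"
  shows "sep_combination p q \<rho> t"
  unfolding sep_combination_def using assms by (intro exI[of _ m] exI[of _ w] exI[of _ A] exI[of _ B]) auto

lemma sep_combinationE:
  assumes "sep_combination p q \<rho> t"
  obtains m :: nat and w A B
  where "\<forall>k<m. 0 \<le> w k \<and> density_matrix p (A k) \<and> density_matrix q (B k)"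
    and "(\<Sum>k<m. w k) = t"
    and "\<And>i j i' j'. i < p \<Longrightarrow> j < q \<Longrightarrow> i' < p \<Longrightarrow> j' < q \<Longrightarrow>
           \<rho> (i, j) (i', j') = (\<Sum>k<m. complex_of_real (w k) * A k i i' * B k j j')"
  using assms unfolding sep_combination_def by blast

lemma sep_combination_cong:
  assumes "sep_combination p q \<rho> t"
    and "\<And>i j i' j'. i < p \<Longrightarrow> j < q \<Longrightarrow> i' < p \<Longrightarrow> j' < q \<Longrightarrow> \<rho> (i, j) (i', j') = \<rho>' (i, j) (i', j')"
  shows "sep_combination p q \<rho>' t"
  using assms(1) by (rule sep_combinationE) (rule sep_combinationI; simp add: assms(2))

lemma sep_combination_zero: "sep_combination p q (\<lambda>X Y. 0) 0"
  unfolding sep_combination_def by (rule exI[of _ 0]) simp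

lemma sep_combination_product:
  assumes "density_matrix p A" "density_matrix q B"
  shows "sep_combination p q (\<lambda>X Y. A (fst X) (fst Y) * B (snd X) (snd Y)) 1"
  unfolding sep_combination_def
  by (rule exI[of _ 1], rule exI[of _ "\<lambda>_. 1"], rule exI[of _ "\<lambda>_. A"], rule exI[of _ "\<lambda>_. B"])
     (use assms in auto)

lemma sep_combination_scale:
  assumes "sep_combination p q \<rho> t" "0 \<le> c"
  shows "sep_combination p q (\<lambda>X Y. complex_of_real c * \<rho> X Y) (c * t)"
  using assms(1)
proof (rule sep_combinationE)
  fix m :: nat and w A B
  assume "\<forall>k<m. 0 \<le> w k \<and> density_matrix p (A k) \<and> density_matrix q (B k)" "(\<Sum>k<m. w k) = t"
    and "\<And>i j i' j'. i < p \<Longrightarrow> j < q \<Longrightarrow> i' < p \<Longrightarrow> j' < q \<Longrightarrow>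
           \<rho> (i, j) (i', j') = (\<Sum>k<m. complex_of_real (w k) * A k i i' * B k j j')"
  then show ?thesis
    using assms(2) by (intro sep_combinationI[of m "\<lambda>k. c * w k" p A q B])
      (auto simp: sum_distrib_left mult.assoc)
qed

lemma sum_lessThan_add:
  fixes f :: "nat \<Rightarrow> 'a::comm_monoid_add"
  shows "(\<Sum>k<m + n. f k) = (\<Sum>k<m. f k) + (\<Sum>k<n. f (k + m))"
  by (induction n) (simp_all add: add.assoc add.commute[of m])

lemma sep_combination_add:
  assumes "sep_combination p q \<rho>1 t1" "sep_combination p q \<rho>2 t2"
  shows "sep_combination p q (\<lambda>X Y. \<rho>1 X Y + \<rho>2 X Y) (t1 + t2)"
proof -
  obtain m1 :: nat and w1 A1 B1 where h1:
    "\<forall>k<m1. 0 \<le> w1 k \<and> density_matrix p (A1 k) \<and> density_matrix q (B1 k)" "(\<Sum>k<m1. w1 k) = t1"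
    "\<And>i j i' j'. i < p \<Longrightarrow> j < q \<Longrightarrow> i' < p \<Longrightarrow> j' < q \<Longrightarrow>
       \<rho>1 (i, j) (i', j') = (\<Sum>k<m1. complex_of_real (w1 k) * A1 k i i' * B1 k j j')"
    using assms(1) by (rule sep_combinationE) blast
  obtain m2 :: nat and w2 A2 B2 where h2:
    "\<forall>k<m2. 0 \<le> w2 k \<and> density_matrix p (A2 k) \<and> density_matrix q (B2 k)" "(\<Sum>k<m2. w2 k) = t2"
    "\<And>i j i' j'. i < p \<Longrightarrow> j < q \<Longrightarrow> i' < p \<Longrightarrow> j' < q \<Longrightarrow>
       \<rho>2 (i, j) (i', j') = (\<Sum>k<m2. complex_of_real (w2 k) * A2 k i i' * B2 k j j')"
    using assms(2) by (rule sep_combinationE) blast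
  define w where "w k = (if k < m1 then w1 k else w2 (k - m1))" for k
  define A where "A k = (if k < m1 then A1 k else A2 (k - m1))" for k
  define B where "B k = (if k < m1 then B1 k else B2 (k - m1))" for k
  show ?thesis
  proof (rule sep_combinationI[of "m1 + m2" w p A q B])
    show "\<forall>k<m1 + m2. 0 \<le> w k \<and> density_matrix p (A k) \<and> density_matrix q (B k)"
      using h1(1) h2(1) by (auto simp: w_def A_def B_def)
    show "(\<Sum>k<m1 + m2. w k) = t1 + t2"
      using h1(2) h2(2) by (simp add: sum_lessThan_add w_def)
    show "\<rho>1 (i, j) (i', j') + \<rho>2 (i, j) (i', j') =
        (\<Sum>k<m1 + m2. complex_of_real (w k) * A k i i' * B k j j')"
      if "i < p" "j < q" "i' < p" "j' < q" for i j i' j'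
      using h1(3)[OF that] h2(3)[OF that] by (simp add: sum_lessThan_add w_def A_def B_def)
  qed
qed

lemma sep_combination_sum:
  assumes "finite S" "\<And>s. s \<in> S \<Longrightarrow> sep_combination p q (\<rho> s) (t s)"
  shows "sep_combination p q (\<lambda>X Y. \<Sum>s\<in>S. \<rho> s X Y) (\<Sum>s\<in>S. t s)"
  using assms
proof (induction S rule: finite_induct)
  case empty
  then show ?case using sep_combination_zero by simp
next
  case (insert s S)
  then show ?case
    using sep_combination_add[of p q "\<rho> s" "t s" "\<lambda>X Y. \<Sum>s\<in>S. \<rho> s X Y"] by simp
qed

lemma density_matrix_rank_one:
  fixes f :: "nat \<Rightarrow> real"
  assumes "0 \<le> c" "c * (\<Sum>i<n. (f i)\<^sup>2) = 1"
  shows "density_matrix n (\<lambda>i j. complex_of_real (c * f i * f j))"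
  unfolding density_matrix_def
proof (intro conjI allI impI)
  fix x :: "nat \<Rightarrow> complex"
  define s where "s = (\<Sum>j<n. complex_of_real (f j) * x j)"
  have "(\<Sum>i<n. \<Sum>j<n. cnj (x i) * complex_of_real (c * f i * f j) * x j) = complex_of_real c * (cnj s * s)"
    unfolding s_def by (simp add: sum_distrib_left sum_distrib_right cnj_sum mult_ac)
  then show "0 \<le> Re (\<Sum>i<n. \<Sum>j<n. cnj (x i) * complex_of_real (c * f i * f j) * x j)"
    using assms(1) by (simp add: complex_mult_cnj[of s, simplified mult.commute])
next
  show "(\<Sum>i<n. complex_of_real (c * f i * f i)) = 1"
    using assms(2) unfolding of_real_sum[symmetric]
    by (simp add: power2_eq_square sum_distrib_left mult.assoc)
qed simp

lemma sep_combination_rank_one: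
  fixes f g :: "nat \<Rightarrow> real"
  shows "sep_combination p q
           (\<lambda>X Y. complex_of_real (f (fst X) * f (fst Y) * (g (snd X) * g (snd Y))))
           ((\<Sum>i<p. (f i)\<^sup>2) * (\<Sum>j<q. (g j)\<^sup>2))"
proof -
  define a where "a = (\<Sum>i<p. (f i)\<^sup>2)"
  define b where "b = (\<Sum>j<q. (g j)\<^sup>2)"
  have "0 \<le> a" "0 \<le> b" unfolding a_def b_def by (simp_all add: sum_nonneg)
  show ?thesis
  proof (cases "a = 0 \<or> b = 0")
    case True
    then have "(\<forall>i<p. f i = 0) \<or> (\<forall>j<q. g j = 0)"
      unfolding a_def b_def by (auto simp: sum_nonneg_eq_0_iff)
    then show ?thesis
      using sep_combination_cong[OF sep_combination_zero] True
      by (auto simp: a_def[symmetric] b_def[symmetric])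
  next
    case False
    with \<open>0 \<le> a\<close> \<open>0 \<le> b\<close> have "0 < a" "0 < b" by auto
    have "density_matrix p (\<lambda>i j. complex_of_real (1 / a * f i * f j))"
      by (rule density_matrix_rank_one) (use \<open>0 < a\<close> in \<open>simp_all add: a_def\<close>)
    moreover have "density_matrix q (\<lambda>i j. complex_of_real (1 / b * g i * g j))"
      by (rule density_matrix_rank_one) (use \<open>0 < b\<close> in \<open>simp_all add: b_def\<close>)
    ultimately have "sep_combination p q (\<lambda>X Y. complex_of_real (a * b) *
        (complex_of_real (1 / a * f (fst X) * f (fst Y)) * complex_of_real (1 / b * g (snd X) * g (snd Y))))
        (a * b * 1)"
      using \<open>0 < a\<close> \<open>0 < b\<close> by (intro sep_combination_scale sep_combination_product) simp_all
    then show ?thesis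
      unfolding a_def[symmetric] b_def[symmetric] mult_1_right
      by (rule sep_combination_cong) (use \<open>0 < a\<close> \<open>0 < b\<close> in simp)
  qed
qed

section \<open>The partial transpose test\<close>

lemma sum_spike_expand:
  fixes K :: "'a \<Rightarrow> 'b::comm_ring_1"
  assumes "finite S" "v \<in> S"
  shows "(\<Sum>X\<in>S. (c1 + c2 * of_bool (X = v)) * K X) = c1 * (\<Sum>X\<in>S. K X) + c2 * K v"
proof -
  have "(\<Sum>X\<in>S. (c1 + c2 * of_bool (X = v)) * K X) = (\<Sum>X\<in>S. c1 * K X + (if X = v then c2 * K X else 0))"
    by (intro sum.cong) (auto simp: algebra_simps)
  then show ?thesis
    using assms by (simp add: sum.distrib sum_distrib_left)
qed

lemma sum_sum_spike_expand:
  fixes M :: "'a \<Rightarrow> 'a \<Rightarrow> 'b::comm_ring_1"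
  assumes "finite S" "v \<in> S"
  shows "(\<Sum>X\<in>S. \<Sum>Y\<in>S. (c1 + c2 * of_bool (X = v)) * (d1 + d2 * of_bool (Y = v)) * M X Y)
       = c1 * d1 * (\<Sum>X\<in>S. \<Sum>Y\<in>S. M X Y) + c1 * d2 * (\<Sum>X\<in>S. M X v)
         + c2 * d1 * (\<Sum>Y\<in>S. M v Y) + c2 * d2 * M v v"
proof -
  have inner: "(\<Sum>Y\<in>S. (c1 + c2 * of_bool (X = v)) * (d1 + d2 * of_bool (Y = v)) * M X Y)
      = (c1 + c2 * of_bool (X = v)) * (d1 * (\<Sum>Y\<in>S. M X Y) + d2 * M X v)" for X
    by (simp add: mult.assoc sum_spike_expand[OF assms] flip: sum_distrib_left)
  show ?thesis
    unfolding inner sum_spike_expand[OF assms]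
    by (simp add: sum.distrib sum_distrib_left algebra_simps)
qed

definition spike_form :: "'a set \<Rightarrow> 'a \<Rightarrow> real \<Rightarrow> ('a \<Rightarrow> 'a \<Rightarrow> complex) \<Rightarrow> complex" where
  "spike_form S v t M =
     (\<Sum>X\<in>S. \<Sum>Y\<in>S. (1 + of_real t * of_bool (X = v)) * (1 + of_real t * of_bool (Y = v)) * M X Y)"

lemma spike_form_expand:
  assumes "finite S" "v \<in> S"
  shows "spike_form S v t M = (\<Sum>X\<in>S. \<Sum>Y\<in>S. M X Y)
           + of_real t * ((\<Sum>X\<in>S. M X v) + (\<Sum>Y\<in>S. M v Y)) + of_real (t\<^sup>2) * M v v"
  unfolding spike_form_def sum_sum_spike_expand[OF assms]
  by (simp add: algebra_simps power2_eq_square)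

lemma spike_form_cong:
  assumes "\<And>X Y. X \<in> S \<Longrightarrow> Y \<in> S \<Longrightarrow> M X Y = M' X Y"
  shows "spike_form S v t M = spike_form S v t M'"
  unfolding spike_form_def using assms by (intro sum.cong) auto

lemma spike_form_sum:
  "spike_form S v t (\<lambda>X Y. \<Sum>k<m. c k * M k X Y) = (\<Sum>k<m. c k * spike_form S v t (M k))"
proof -
  define z where "z X = (1 + of_real t * of_bool (X = v) :: complex)" for X
  have "spike_form S v t (\<lambda>X Y. \<Sum>k<m. c k * M k X Y) = (\<Sum>X\<in>S. \<Sum>Y\<in>S. \<Sum>k<m. c k * (z X * z Y * M k X Y))"
    unfolding spike_form_def z_def by (simp add: sum_distrib_left mult_ac)
  also have "\<dots> = (\<Sum>X\<in>S. \<Sum>k<m. \<Sum>Y\<in>S. c k * (z X * z Y * M k X Y))"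
    by (intro sum.cong refl) (rule sum.swap)
  also have "\<dots> = (\<Sum>k<m. c k * spike_form S v t (M k))"
    unfolding spike_form_def z_def by (subst sum.swap) (simp add: sum_distrib_left)
  finally show ?thesis .
qed

lemma spike_form_divide:
  "spike_form S v t (\<lambda>X Y. M X Y / c) = spike_form S v t M / c"
  unfolding spike_form_def by (simp add: sum_divide_distrib)

lemma le_mult_if_binary_form_nonneg:
  fixes a c N :: real
  assumes "0 \<le> a" "0 \<le> N" and form: "\<And>l r. 0 \<le> l\<^sup>2 * N * a - 2 * l * r * N + r\<^sup>2 * c"
  shows "N \<le> a * c"
proof (cases "a = 0")
  case False
  have "0 \<le> a * (a * c - N)"
    using form[of 1 a] by (simp add: power2_eq_square algebra_simps)
  then show ?thesis
    using False assms(1) by (simp add: zero_le_mult_iff)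
next
  case True
  have "0 \<le> c" using form[of 0 1] by simp
  show ?thesis
  proof (rule ccontr)
    assume "\<not> N \<le> a * c"
    then have "0 < N" using True by simp
    then have "0 \<le> - 2 * (c + 1) + c"
      using form[of "(c + 1) / N" 1] True by simp
    with \<open>0 \<le> c\<close> show False by simp
  qed
qed

lemma density_matrix_hermitian:
  assumes "density_matrix n A" "i < n" "j < n"
  shows "A j i = cnj (A i j)"
  using assms unfolding density_matrix_def by blast

lemma density_matrix_psd:
  assumes "density_matrix n A"
  shows "0 \<le> Re (\<Sum>i<n. \<Sum>j<n. cnj (x i) * A i j * x j)"
  using assms unfolding density_matrix_def by blast

lemma density_matrix_spike_form_nonneg:
  assumes D: "density_matrix n A" and v: "v < n"
  shows "0 \<le> Re (cnj s1 * s1 * (\<Sum>i<n. \<Sum>j<n. A i j) + cnj s1 * s2 * (\<Sum>i<n. A i v)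
                   + cnj s2 * s1 * (\<Sum>j<n. A v j) + cnj s2 * s2 * A v v)"
proof -
  have "0 \<le> Re (\<Sum>i<n. \<Sum>j<n. cnj (s1 + s2 * of_bool (i = v)) * A i j * (s1 + s2 * of_bool (j = v)))"
    using D by (rule density_matrix_psd)
  also have "(\<Sum>i<n. \<Sum>j<n. cnj (s1 + s2 * of_bool (i = v)) * A i j * (s1 + s2 * of_bool (j = v)))
      = (\<Sum>i<n. \<Sum>j<n. (cnj s1 + cnj s2 * of_bool (i = v)) * (s1 + s2 * of_bool (j = v)) * A i j)"
    by (intro sum.cong) (auto simp: mult_ac)
  finally show ?thesis
    using v by (simp add: sum_sum_spike_expand)
qed

lemma density_matrix_spike_bounds:
  assumes D: "density_matrix n A" and v: "v < n"
  defines "a \<equiv> \<Sum>i<n. \<Sum>j<n. A i j" and "g \<equiv> \<Sum>j<n. A v j"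
  shows "(\<Sum>i<n. A i v) = cnj g" "Im a = 0" "Im (A v v) = 0" "0 \<le> Re a" "0 \<le> Re (A v v)"
    and "(cmod g)\<^sup>2 \<le> Re a * Re (A v v)"
proof -
  note herm = density_matrix_hermitian[OF D]
  show col: "(\<Sum>i<n. A i v) = cnj g"
    unfolding g_def cnj_sum by (intro sum.cong refl) (rule herm[OF v]; simp)
  have "cnj a = (\<Sum>i<n. \<Sum>j<n. A j i)"
    unfolding a_def cnj_sum by (intro sum.cong refl) (rule herm[symmetric]; simp)
  also have "\<dots> = a"
    unfolding a_def by (rule sum.swap)
  finally show "Im a = 0"
    by (simp add: complex_eq_iff)
  show "Im (A v v) = 0"
    using herm[OF v v] by (simp add: complex_eq_iff)
  note form = density_matrix_spike_form_nonneg[OF D v, folded a_def g_def, unfolded col]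
  show a_nonneg: "0 \<le> Re a"
    using form[of 1 0] by simp
  show "0 \<le> Re (A v v)"
    using form[of 0 1] by simp
  have "0 \<le> l\<^sup>2 * (cmod g)\<^sup>2 * Re a - 2 * l * r * (cmod g)\<^sup>2 + r\<^sup>2 * Re (A v v)" for l r
  proof -
    have "cnj (- of_real l * cnj g) * (- of_real l * cnj g) * a + cnj (- of_real l * cnj g) * of_real r * cnj g
        + cnj (of_real r) * (- of_real l * cnj g) * g + cnj (of_real r) * of_real r * A v v
      = of_real (l\<^sup>2) * (g * cnj g) * a - 2 * of_real (l * r) * (g * cnj g) + of_real (r\<^sup>2) * A v v"
      by (simp add: algebra_simps power2_eq_square)
    then show ?thesis
      using form[of "- of_real l * cnj g" "of_real r"] \<open>Im a = 0\<close> \<open>Im (A v v) = 0\<close>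
      by (simp add: complex_mult_cnj cmod_power2)
  qed
  then show "(cmod g)\<^sup>2 \<le> Re a * Re (A v v)"
    by (intro le_mult_if_binary_form_nonneg[OF a_nonneg]) auto
qed

text \<open>Nonnegativity of the quadratic form, at the vector (1, t), of the entrywise product of
  the positive semidefinite matrices [[a, g], [cnj g, c]] and [[b, h], [cnj h, d]].\<close>
lemma schur_product_2x2_form_nonneg:
  fixes a b c d t :: real and g h :: complex
  assumes "0 \<le> a" "0 \<le> b" "0 \<le> c" "0 \<le> d" "(cmod g)\<^sup>2 \<le> a * c" "(cmod h)\<^sup>2 \<le> b * d"
  shows "0 \<le> a * b + 2 * t * Re (cnj g * h) + t\<^sup>2 * (c * d)"
proof -
  have "(t * Re (cnj g * h))\<^sup>2 \<le> t\<^sup>2 * ((cmod g)\<^sup>2 * (cmod h)\<^sup>2)"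
    using abs_Re_le_cmod[of "cnj g * h"] power_mono[OF _ abs_ge_zero, of "Re (cnj g * h)" "cmod g * cmod h" 2]
    by (simp add: power_mult_distrib norm_mult mult_left_mono)
  also have "\<dots> \<le> t\<^sup>2 * ((a * c) * (b * d))"
    using assms by (intro mult_left_mono mult_mono) auto
  also have "\<dots> = (a * b) * (t\<^sup>2 * (c * d))"
    by (simp add: algebra_simps)
  also have "\<dots> \<le> ((a * b + t\<^sup>2 * (c * d)) / 2)\<^sup>2"
    using zero_le_power2[of "a * b - t\<^sup>2 * (c * d)"] by (simp add: power2_eq_square field_simps)
  finally have "\<bar>t * Re (cnj g * h)\<bar> \<le> \<bar>(a * b + t\<^sup>2 * (c * d)) / 2\<bar>"
    using abs_le_square_iff by blast
  moreover have "0 \<le> a * b + t\<^sup>2 * (c * d)"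
    using assms by simp
  ultimately have "- (t * Re (cnj g * h)) \<le> (a * b + t\<^sup>2 * (c * d)) / 2"
    by (simp add: abs_le_iff)
  then show ?thesis
    by (simp add: field_simps)
qed

lemma sum_grid_product:
  fixes f g :: "nat \<Rightarrow> 'a::comm_semiring_0"
  shows "(\<Sum>X\<in>grid p q. f (fst X) * g (snd X)) = (\<Sum>i<p. f i) * (\<Sum>j<q. g j)"
  unfolding grid_def by (simp add: sum_product sum.cartesian_product case_prod_unfold)

lemma spike_form_ptrans_B_product_nonneg:
  assumes DA: "density_matrix p A" and DB: "density_matrix q B" and v: "v \<in> grid p q"
  shows "0 \<le> Re (spike_form (grid p q) v t (mat_ptrans_B (\<lambda>X Y. A (fst X) (fst Y) * B (snd X) (snd Y))))"
proof -
  obtain v1 v2 where v_eq: "v = (v1, v2)" and v1: "v1 < p" and v2: "v2 < q"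
    using v unfolding grid_def by auto
  define a where "a = (\<Sum>i<p. \<Sum>j<p. A i j)"
  define g where "g = (\<Sum>j<p. A v1 j)"
  define b where "b = (\<Sum>i<q. \<Sum>j<q. B i j)"
  define h where "h = (\<Sum>j<q. B v2 j)"
  note bA = density_matrix_spike_bounds[OF DA v1, folded a_def g_def]
  note bB = density_matrix_spike_bounds[OF DB v2, folded b_def h_def]
  have "(\<Sum>X\<in>grid p q. \<Sum>Y\<in>grid p q. A (fst X) (fst Y) * B (snd Y) (snd X))
      = (\<Sum>X\<in>grid p q. (\<Sum>i<p. A (fst X) i) * (\<Sum>j<q. B j (snd X)))"
    by (intro sum.cong refl) (rule sum_grid_product)
  also have "\<dots> = a * (\<Sum>i<q. \<Sum>j<q. B j i)"
    unfolding a_def by (rule sum_grid_product)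
  also have "\<dots> = a * b"
    unfolding b_def by (subst sum.swap) (rule refl)
  finally have total: "(\<Sum>X\<in>grid p q. \<Sum>Y\<in>grid p q. A (fst X) (fst Y) * B (snd Y) (snd X)) = a * b" .
  have col: "(\<Sum>X\<in>grid p q. A (fst X) v1 * B v2 (snd X)) = cnj g * h"
    using sum_grid_product[of "\<lambda>i. A i v1" "\<lambda>j. B v2 j"] bA(1) by (simp add: h_def)
  have row: "(\<Sum>Y\<in>grid p q. A v1 (fst Y) * B (snd Y) v2) = g * cnj h"
    using sum_grid_product[of "\<lambda>i. A v1 i" "\<lambda>j. B j v2"] bB(1) by (simp add: g_def)
  have "Re (spike_form (grid p q) v t (mat_ptrans_B (\<lambda>X Y. A (fst X) (fst Y) * B (snd X) (snd Y))))
      = Re a * Re b + 2 * t * Re (cnj g * h) + t\<^sup>2 * (Re (A v1 v1) * Re (B v2 v2))"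
    unfolding spike_form_expand[OF finite_grid v] using bA(2,3) bB(2,3)
    by (simp add: mat_ptrans_B_def total v_eq col row)
  also have "0 \<le> \<dots>"
    using bA(4-6) bB(4-6) by (intro schur_product_2x2_form_nonneg) auto
  finally show ?thesis
    by simp
qed

lemma separable_spike_form_ptrans_B_nonneg:
  assumes "separable p q \<rho>" "v \<in> grid p q"
  shows "0 \<le> Re (spike_form (grid p q) v t (mat_ptrans_B \<rho>))"
proof -
  obtain m :: nat and w A B where
    states: "\<forall>k<m. 0 \<le> w k \<and> density_matrix p (A k) \<and> density_matrix q (B k)" and
    decomp: "\<And>i j i' j'. i < p \<Longrightarrow> j < q \<Longrightarrow> i' < p \<Longrightarrow> j' < q \<Longrightarrow>
       \<rho> (i, j) (i', j') = (\<Sum>k<m. complex_of_real (w k) * A k i i' * B k j j')"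
    using assms(1) unfolding separable_iff_sep_combination by (rule sep_combinationE) blast
  define P where "P k = mat_ptrans_B (\<lambda>X Y. A k (fst X) (fst Y) * B k (snd X) (snd Y))" for k
  have "spike_form (grid p q) v t (mat_ptrans_B \<rho>)
      = spike_form (grid p q) v t (\<lambda>X Y. \<Sum>k<m. complex_of_real (w k) * P k X Y)"
    by (rule spike_form_cong) (auto simp: grid_def mat_ptrans_B_def P_def decomp mult.assoc)
  also have "\<dots> = (\<Sum>k<m. complex_of_real (w k) * spike_form (grid p q) v t (P k))"
    by (rule spike_form_sum)
  finally have "Re (spike_form (grid p q) v t (mat_ptrans_B \<rho>))
      = (\<Sum>k<m. w k * Re (spike_form (grid p q) v t (P k)))"
    by (simp add: Re_sum)
  also have "0 \<le> \<dots>"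
    using states assms(2) unfolding P_def
    by (intro sum_nonneg mult_nonneg_nonneg spike_form_ptrans_B_product_nonneg) auto
  finally show ?thesis .
qed

lemma spike_form_laplacian_ptrans_B:
  assumes E: "simple_graph_on (grid p q) E" and v: "v \<in> grid p q"
  shows "spike_form (grid p q) v t (mat_ptrans_B (laplacian E))
    = of_real (2 * t * (real (degree E v) - real (degree (ptrans_B E) v)) + t\<^sup>2 * real (degree E v))"
proof -
  have E': "simple_graph_on (grid p q) (ptrans_B E)"
    using E by (rule simple_graph_on_ptrans_B)
  have "(\<Sum>X\<in>grid p q. \<Sum>Y\<in>grid p q. mat_ptrans_B (laplacian E) X Y)
      = (\<Sum>X\<in>grid p q. \<Sum>Y\<in>grid p q. laplacian E X Y)"
    unfolding grid_def by (rule sum_mat_ptrans_B)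
  also have "\<dots> = 0"
    using laplacian_row_sum[OF E finite_grid] by simp
  finally have total: "(\<Sum>X\<in>grid p q. \<Sum>Y\<in>grid p q. mat_ptrans_B (laplacian E) X Y) = 0" .
  have row: "(\<Sum>Y\<in>grid p q. mat_ptrans_B (laplacian E) v Y)
      = of_nat (degree E v) - of_nat (degree (ptrans_B E) v)"
    unfolding laplacian_ptrans_B sum_subtractf
    using sum_degree_matrix_row[OF finite_grid v] sum_adj_matrix_row[OF E' finite_grid] by simp
  have "(\<Sum>X\<in>grid p q. mat_ptrans_B (laplacian E) X v) = (\<Sum>Y\<in>grid p q. mat_ptrans_B (laplacian E) v Y)"
    unfolding laplacian_ptrans_B by (intro sum.cong refl) (simp only: degree_matrix_sym adj_matrix_sym)
  with row have col: "(\<Sum>X\<in>grid p q. mat_ptrans_B (laplacian E) X v)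
      = of_nat (degree E v) - of_nat (degree (ptrans_B E) v)"
    by simp
  have "{v, v} \<notin> ptrans_B E"
    using simple_graph_on_edgeD(3)[OF E'] by blast
  then have diag: "mat_ptrans_B (laplacian E) v v = of_nat (degree E v)"
    by (simp add: laplacian_ptrans_B degree_matrix_def adj_matrix_def)
  show ?thesis
    unfolding spike_form_expand[OF finite_grid v] total row col diag
    by (simp add: algebra_simps)
qed

lemma linear_coeff_zero_if_quadratic_nonneg:
  fixes D d :: real
  assumes "\<And>t. 0 \<le> 2 * t * D + t\<^sup>2 * d"
  shows "D = 0"
proof (rule ccontr)
  assume "D \<noteq> 0"
  define s where "s = 1 / (\<bar>d\<bar> + 1)"
  have "0 < s" "s * d < 2"
    unfolding s_def by (auto simp: field_simps abs_if)
  have "2 * (- s * D) * D + (- s * D)\<^sup>2 * d = s * D\<^sup>2 * (s * d - 2)"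
    by (simp add: algebra_simps power2_eq_square)
  also have "\<dots> < 0"
    using \<open>0 < s\<close> \<open>s * d < 2\<close> \<open>D \<noteq> 0\<close> by (simp add: mult_pos_neg)
  finally show False
    using assms[of "- s * D"] by simp
qed

lemma degree_ptrans_B_eq_if_separable:
  assumes E: "simple_graph_on (grid p q) E" and "E \<noteq> {}"
    and sep: "separable p q (rho E)" and v: "v \<in> grid p q"
  shows "degree E v = degree (ptrans_B E) v"
proof -
  have "0 < card E"
    using simple_graph_on_finite[OF E finite_grid] assms(2) by (simp add: card_gt_0_iff)
  have "mat_ptrans_B (rho E) = (\<lambda>X Y. mat_ptrans_B (laplacian E) X Y / of_nat (2 * card E))"
    by (simp add: fun_eq_iff mat_ptrans_B_def rho_def)
  then have "0 \<le> Re (spike_form (grid p q) v t (mat_ptrans_B (laplacian E)) / of_nat (2 * card E))" for t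
    using separable_spike_form_ptrans_B_nonneg[OF sep v, of t] by (simp add: spike_form_divide)
  then have "0 \<le> 2 * t * (real (degree E v) - real (degree (ptrans_B E) v)) + t\<^sup>2 * real (degree E v)" for t
    using \<open>0 < card E\<close> by (simp add: spike_form_laplacian_ptrans_B[OF E v] zero_le_divide_iff)
  then show ?thesis
    using linear_coeff_zero_if_quadratic_nonneg by fastforce
qed

section \<open>Nearest point graphs\<close>

definition ptrans_B_defect :: "vertex set set \<Rightarrow> vertex \<Rightarrow> vertex \<Rightarrow> bool" where
  "ptrans_B_defect E x y \<longleftrightarrow> ({x, y} \<in> E \<longleftrightarrow> {x, y} \<notin> ptrans_B E)"

lemma ptrans_B_defect_sym: "ptrans_B_defect E x y \<longleftrightarrow> ptrans_B_defect E y x"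
  by (simp add: ptrans_B_defect_def insert_commute)

lemma ptrans_B_defect_swap:
  "ptrans_B_defect E (fst x, snd y) (fst y, snd x) \<longleftrightarrow> ptrans_B_defect E x y"
  by (auto simp: ptrans_B_defect_def mem_ptrans_B)

lemma not_ptrans_B_defect_if_aligned:
  assumes "fst x = fst y \<or> snd x = snd y"
  shows "\<not> ptrans_B_defect E x y"
  using assms by (cases x; cases y) (auto simp: ptrans_B_defect_def mem_ptrans_B insert_commute)

lemma sq_dist_eq_if_ptrans_B_defect:
  assumes "nearest_point_graph p q E" "ptrans_B_defect E x y"
  shows "(int (fst x) - int (fst y))\<^sup>2 + (int (snd x) - int (snd y))\<^sup>2 \<in> {1, 2}"
proof -
  have dist: "(int i - int i')\<^sup>2 + (int j - int j')\<^sup>2 \<in> {1, 2}" if "{(i, j), (i', j')} \<in> E" for i j i' j'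
    using assms(1) that unfolding nearest_point_graph_def by blast
  from assms(2) consider "{x, y} \<in> E" | "{(fst x, snd y), (fst y, snd x)} \<in> E"
    by (auto simp: ptrans_B_defect_def mem_ptrans_B)
  then show ?thesis
  proof cases
    case 1
    then show ?thesis using dist[of "fst x" "snd x" "fst y" "snd y"] by simp
  next
    case 2
    then show ?thesis using dist[of "fst x" "snd y" "fst y" "snd x"] by (simp add: power2_commute)
  qed
qed

lemma ptrans_B_defect_diagonal:
  assumes "nearest_point_graph p q E" "ptrans_B_defect E x y"
  shows "(fst y = fst x + 1 \<or> fst x = fst y + 1) \<and> (snd y = snd x + 1 \<or> snd x = snd y + 1)"
proof -
  have "fst x \<noteq> fst y" "snd x \<noteq> snd y"
    using not_ptrans_B_defect_if_aligned assms(2) by blast+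
  then have "1 \<le> (int (fst x) - int (fst y))\<^sup>2" "1 \<le> (int (snd x) - int (snd y))\<^sup>2"
    by (simp_all add: int_one_le_iff_zero_less)
  with sq_dist_eq_if_ptrans_B_defect[OF assms] have
    "(int (fst x) - int (fst y))\<^sup>2 = 1" "(int (snd x) - int (snd y))\<^sup>2 = 1"
    by auto
  then show ?thesis
    by (auto simp: power2_eq_1_iff)
qed

lemma ptrans_B_defect_at_corner:
  assumes "nearest_point_graph p q E" "ptrans_B_defect E x y"
  defines "i \<equiv> min (fst x) (fst y)" and "j \<equiv> min (snd x) (snd y)"
  shows "ptrans_B_defect E (i, j) (i + 1, j + 1)"
proof -
  from ptrans_B_defect_diagonal[OF assms(1,2)] consider
      "fst y = fst x + 1" "snd y = snd x + 1"
    | "fst y = fst x + 1" "snd x = snd y + 1"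
    | "fst x = fst y + 1" "snd y = snd x + 1"
    | "fst x = fst y + 1" "snd x = snd y + 1"
    by blast
  then show ?thesis
  proof cases
    case 1
    then have "x = (i, j)" "y = (i + 1, j + 1)"
      by (auto simp: i_def j_def prod_eq_iff)
    then show ?thesis using assms(2) by simp
  next
    case 2
    then show ?thesis using assms(2) ptrans_B_defect_swap[of E x y] by (simp add: i_def j_def)
  next
    case 3
    then show ?thesis
      using assms(2) ptrans_B_defect_swap[of E x y] ptrans_B_defect_sym[of E "(fst x, snd y)"]
      by (simp add: i_def j_def)
  next
    case 4
    then have "y = (i, j)" "x = (i + 1, j + 1)"
      by (auto simp: i_def j_def prod_eq_iff)
    then show ?thesis using assms(2) ptrans_B_defect_sym[of E x y] by simp
  qed
qed

lemma card_ne_if_differ_exactly_at: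
  assumes "finite S" "finite T" "\<And>x. x \<noteq> a \<Longrightarrow> x \<in> S \<longleftrightarrow> x \<in> T" "a \<in> S \<longleftrightarrow> a \<notin> T"
  shows "card S \<noteq> card T"
proof (cases "a \<in> S")
  case True
  have "S = insert a T"
    using assms(3,4) True by (auto intro!: set_eqI) (metis insertE)
  then show ?thesis using assms(2,4) True by simp
next
  case False
  have "T = insert a S"
    using assms(3,4) False by (auto intro!: set_eqI) (metis insertE)
  then show ?thesis using assms(1,4) False by simp
qed

lemma degree_ne_if_unique_ptrans_B_defect:
  assumes E: "simple_graph_on (grid p q) E"
    and "ptrans_B_defect E v w0" "\<And>w. ptrans_B_defect E v w \<Longrightarrow> w = w0"
  shows "degree E v \<noteq> degree (ptrans_B E) v"
  unfolding degree_def
proof (rule card_ne_if_differ_exactly_at)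
  show "finite {w. {v, w} \<in> E}"
    by (rule finite_subset[OF _ finite_grid]) (use simple_graph_on_edgeD(2)[OF E] in blast)
  show "finite {w. {v, w} \<in> ptrans_B E}"
    by (rule finite_subset[OF _ finite_grid])
      (use simple_graph_on_edgeD(2)[OF simple_graph_on_ptrans_B[OF E]] in blast)
  show "w \<in> {w. {v, w} \<in> E} \<longleftrightarrow> w \<in> {w. {v, w} \<in> ptrans_B E}" if "w \<noteq> w0" for w
    using assms(3) that unfolding ptrans_B_defect_def by blast
  show "w0 \<in> {w. {v, w} \<in> E} \<longleftrightarrow> w0 \<notin> {w. {v, w} \<in> ptrans_B E}"
    using assms(2) unfolding ptrans_B_defect_def by blast
qed

lemma ptrans_B_eqI:
  assumes "simple_graph_on V E" "\<And>x y. \<not> ptrans_B_defect E x y"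
  shows "ptrans_B E = E"
proof (intro set_eqI iffI)
  fix e assume "e \<in> ptrans_B E"
  then obtain x y where "e = {x, y}" "{x, y} \<in> ptrans_B E"
    unfolding ptrans_B_def by blast
  then show "e \<in> E" using assms(2)[of x y] unfolding ptrans_B_defect_def by auto
next
  fix e assume "e \<in> E"
  moreover obtain x y where "e = {x, y}"
    using assms(1) \<open>e \<in> E\<close> unfolding simple_graph_on_def by blast
  ultimately show "e \<in> ptrans_B E" using assms(2)[of x y] unfolding ptrans_B_defect_def by auto
qed

text \<open>A defect of minimal corner sum i + j sits in the square with lower corner v = (i, j), and
  then (v, v + (1, 1)) is the only defect at v: the others would have a smaller corner.\<close>
lemma ptrans_B_eq_if_degree_eq:
  assumes npg: "nearest_point_graph p q E"
    and deg: "\<And>v. v \<in> grid p q \<Longrightarrow> degree E v = degree (ptrans_B E) v"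
  shows "ptrans_B E = E"
proof -
  have E: "simple_graph_on (grid p q) E"
    using npg unfolding nearest_point_graph_def by blast
  have "\<not> ptrans_B_defect E x y" for x y
  proof (induction "min (fst x) (fst y) + min (snd x) (snd y)" arbitrary: x y rule: less_induct)
    case less
    show ?case
    proof
      assume "ptrans_B_defect E x y"
      define v where "v = (min (fst x) (fst y), min (snd x) (snd y))"
      define w0 where "w0 = (fst v + 1, snd v + 1)"
      have corner: "ptrans_B_defect E v w0"
        using ptrans_B_defect_at_corner[OF npg \<open>ptrans_B_defect E x y\<close>] by (simp add: v_def w0_def)
      have unique: "w = w0" if "ptrans_B_defect E v w" for w
      proof -
        have "\<not> min (fst v) (fst w) + min (snd v) (snd w) < fst v + snd v"
        proof
          assume "min (fst v) (fst w) + min (snd v) (snd w) < fst v + snd v"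
          then have "\<not> ptrans_B_defect E v w"
            using less.hyps[of v w] by (simp add: v_def)
          with that show False by blast
        qed
        then have "fst w = fst v + 1" "snd w = snd v + 1"
          using ptrans_B_defect_diagonal[OF npg that] by linarith+
        then show ?thesis
          by (simp add: w0_def prod_eq_iff)
      qed
      have "v \<in> grid p q"
        using corner simple_graph_on_edgeD(1)[OF E] simple_graph_on_edgeD(1)[OF simple_graph_on_ptrans_B[OF E]]
        unfolding ptrans_B_defect_def by blast
      then show False
        using degree_ne_if_unique_ptrans_B_defect[OF E corner unique] deg by blast
    qed
  qed
  then show ?thesis
    by (rule ptrans_B_eqI[OF E])
qed

section \<open>A product decomposition of the Laplacian\<close>

definition arcs :: "'a set set \<Rightarrow> ('a \<times> 'a) set" where
  "arcs E = {(x, y). {x, y} \<in> E}"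

lemma finite_arcs:
  assumes "simple_graph_on V E" "finite V"
  shows "finite (arcs E)"
proof (rule finite_subset)
  show "arcs E \<subseteq> V \<times> V"
    using simple_graph_on_edgeD[OF assms(1)] unfolding arcs_def by auto
qed (use assms(2) in simp)

lemma card_arcs:
  assumes "simple_graph_on V E" "finite V"
  shows "card (arcs E) = 2 * card E"
proof -
  have fiber: "{a. {fst a, snd a} = {u, v}} = {(u, v), (v, u)}" for u v :: 'a
  proof (intro set_eqI)
    fix a :: "'a \<times> 'a"
    show "a \<in> {a. {fst a, snd a} = {u, v}} \<longleftrightarrow> a \<in> {(u, v), (v, u)}"
      by (cases a) (simp add: doubleton_eq_iff)
  qed
  have card_fiber: "card {a. {fst a, snd a} = e} = 2" if e: "e \<in> E" for e
  proof -
    obtain u v where "u \<noteq> v" "e = {u, v}"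
      using simple_graph_on_edgeE[OF assms(1) e] by metis
    then have "{a. {fst a, snd a} = e} = {(u, v), (v, u)}"
      by (simp only: fiber)
    with \<open>u \<noteq> v\<close> show ?thesis
      by simp
  qed
  have "arcs E = (\<Union>e\<in>E. {a. {fst a, snd a} = e})"
    unfolding arcs_def by auto
  also have "card \<dots> = (\<Sum>e\<in>E. card {a. {fst a, snd a} = e})"
  proof (rule card_UN_disjoint)
    show "finite E"
      using simple_graph_on_finite[OF assms] .
    show "\<forall>e\<in>E. finite {a. {fst a, snd a} = e}"
      using card_fiber by (intro ballI card_ge_0_finite) simp
    show "\<forall>e1\<in>E. \<forall>e2\<in>E. e1 \<noteq> e2 \<longrightarrow> {a. {fst a, snd a} = e1} \<inter> {a. {fst a, snd a} = e2} = {}"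
      by blast
  qed
  also have "\<dots> = 2 * card E"
    by (simp add: card_fiber cong: sum.cong)
  finally show ?thesis .
qed

lemma card_arcs_from: "card {a \<in> arcs E. fst a = x} = degree E x"
proof -
  have "{a \<in> arcs E. fst a = x} = Pair x ` {y. {x, y} \<in> E}"
    unfolding arcs_def by auto
  then show ?thesis
    by (simp add: degree_def card_image inj_on_def)
qed

lemma card_arcs_to: "card {a \<in> arcs E. snd a = x} = degree E x"
proof -
  have "{a \<in> arcs E. snd a = x} = (\<lambda>y. (y, x)) ` {y. {x, y} \<in> E}"
    unfolding arcs_def by (auto simp: insert_commute)
  then show ?thesis
    by (simp add: degree_def card_image inj_on_def)
qed

definition arc_laplacian :: "'a \<times> 'a \<Rightarrow> 'a \<Rightarrow> 'a \<Rightarrow> real" where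
  "arc_laplacian a X Y =
     (of_bool (fst a = X) - of_bool (snd a = X)) * (of_bool (fst a = Y) - of_bool (snd a = Y))"

lemma arc_laplacian_expand:
  "arc_laplacian a X Y = of_bool (X = Y) * (of_bool (fst a = X) + of_bool (snd a = X))
     - of_bool (a = (X, Y)) - of_bool (a = (Y, X))"
  by (cases "fst a = X"; cases "snd a = X"; cases "fst a = Y"; cases "snd a = Y")
     (auto simp: arc_laplacian_def prod_eq_iff)

lemma laplacian_eq_sum_arc_laplacian:
  assumes "finite (arcs E)"
  shows "laplacian E X Y = of_real ((\<Sum>a\<in>arcs E. arc_laplacian a X Y) / 2)"
proof -
  have single: "{a. a = c \<and> a \<in> arcs E} = (if c \<in> arcs E then {c} else {})" for c
    by auto
  have "(\<Sum>a\<in>arcs E. arc_laplacian a X Y)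
      = of_bool (X = Y) * (real (card {a \<in> arcs E. fst a = X}) + real (card {a \<in> arcs E. snd a = X}))
        - of_bool ((X, Y) \<in> arcs E) - of_bool ((Y, X) \<in> arcs E)"
    using assms unfolding arc_laplacian_expand sum_subtractf sum.distrib sum_distrib_left[symmetric]
    by (simp add: Int_def single)
  also have "\<dots> = 2 * (of_bool (X = Y) * real (degree E X) - of_bool ({X, Y} \<in> E))"
    by (simp add: card_arcs_from card_arcs_to) (simp add: arcs_def insert_commute)
  finally show ?thesis
    by (simp add: laplacian_def degree_matrix_def adj_matrix_def)
qed

definition arc_swap :: "('a \<times> 'b) \<times> ('a \<times> 'b) \<Rightarrow> ('a \<times> 'b) \<times> ('a \<times> 'b)" where
  "arc_swap a = ((fst (fst a), snd (snd a)), (fst (snd a), snd (fst a)))"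

lemma sum_arcs_arc_swap:
  assumes "ptrans_B E = E"
  shows "(\<Sum>a\<in>arcs E. f (arc_swap a)) = (\<Sum>a\<in>arcs E. f a)"
proof -
  have mem: "arc_swap a \<in> arcs E" if "a \<in> arcs E" for a
  proof -
    have "{fst a, snd a} \<in> ptrans_B E"
      using that assms by (simp add: arcs_def case_prod_unfold)
    then have "{(fst (fst a), snd (snd a)), (fst (snd a), snd (fst a))} \<in> E"
      by (simp only: mem_ptrans_B)
    then show ?thesis
      by (simp add: arcs_def arc_swap_def)
  qed
  have inv: "arc_swap (arc_swap a) = a" for a
    by (simp add: arc_swap_def)
  show ?thesis
    by (rule sum.reindex_bij_witness[of _ arc_swap arc_swap]) (simp_all add: mem inv)
qed

lemma sum_sq_indicator_pair:
  fixes a c n :: nat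
  assumes "a < n" "c < n"
  shows "(\<Sum>i<n. (of_bool (a = i) + s * of_bool (c = i))\<^sup>2) = 1 + s\<^sup>2 + 2 * s * (of_bool (a = c) :: real)"
proof -
  have "(of_bool (a = i) + s * of_bool (c = i))\<^sup>2
      = of_bool (a = i) + s\<^sup>2 * of_bool (c = i) + 2 * s * of_bool (a = c \<and> c = i)" for i
    by (cases "a = i"; cases "c = i") (auto simp: power2_eq_square algebra_simps)
  moreover have "(\<Sum>i<n. of_bool (x = i)) = (1 :: real)" if "x < n" for x
    using that by (simp add: sum.delta'[of "{..<n}" x "\<lambda>_. 1 :: real", simplified] of_bool_def)
  ultimately show ?thesis
    using assms by (simp add: sum.distrib flip: sum_distrib_left)
qed

lemma arc_laplacian_swap_pair:
  fixes a b c d :: nat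
  defines "f s i \<equiv> of_bool (a = i) + s * of_bool (c = i)" and "g s j \<equiv> of_bool (b = j) + s * of_bool (d = j)"
  shows "arc_laplacian ((a, b), (c, d)) X Y + arc_laplacian ((a, d), (c, b)) X Y
    = (f 1 (fst X) * f 1 (fst Y) * (g (- 1) (snd X) * g (- 1) (snd Y))
       + f (- 1) (fst X) * f (- 1) (fst Y) * (g 1 (snd X) * g 1 (snd Y))) / 2"
  by (simp add: arc_laplacian_def f_def g_def prod_eq_iff of_bool_conj field_simps)

lemma sep_combination_arc_pair:
  assumes "a < p" "c < p" "b < q" "d < q" "(a, b) \<noteq> (c, d)"
  shows "sep_combination p q
    (\<lambda>X Y. complex_of_real (arc_laplacian ((a, b), (c, d)) X Y + arc_laplacian ((a, d), (c, b)) X Y)) 4"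
proof -
  define f where "f s i = of_bool (a = i) + s * of_bool (c = i)" for s :: real and i
  define g where "g s j = of_bool (b = j) + s * of_bool (d = j)" for s :: real and j
  have rank_one_term: "sep_combination p q
      (\<lambda>X Y. complex_of_real (1 / 2) *
         complex_of_real (f s (fst X) * f s (fst Y) * (g (- s) (snd X) * g (- s) (snd Y))))
      (1 / 2 * ((1 + s\<^sup>2 + 2 * s * of_bool (a = c)) * (1 + s\<^sup>2 - 2 * s * of_bool (b = d))))" for s
  proof -
    have "(\<Sum>i<p. (f s i)\<^sup>2) = 1 + s\<^sup>2 + 2 * s * of_bool (a = c)"
      unfolding f_def using assms(1,2) by (rule sum_sq_indicator_pair)
    moreover have "(\<Sum>j<q. (g (- s) j)\<^sup>2) = 1 + s\<^sup>2 - 2 * s * of_bool (b = d)"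
      unfolding g_def using sum_sq_indicator_pair[OF assms(3,4), of "- s"] by simp
    ultimately show ?thesis
      using sep_combination_scale[OF sep_combination_rank_one[of p q "f s" "g (- s)"], of "1 / 2"]
      by simp
  qed
  have "sep_combination p q
      (\<lambda>X Y. complex_of_real (1 / 2) *
         complex_of_real (f 1 (fst X) * f 1 (fst Y) * (g (- 1) (snd X) * g (- 1) (snd Y)))
       + complex_of_real (1 / 2) *
         complex_of_real (f (- 1) (fst X) * f (- 1) (fst Y) * (g 1 (snd X) * g 1 (snd Y))))
      (1 / 2 * ((2 + 2 * of_bool (a = c)) * (2 - 2 * of_bool (b = d)))
       + 1 / 2 * ((2 - 2 * of_bool (a = c)) * (2 + 2 * of_bool (b = d))))"
    using sep_combination_add[OF rank_one_term[of 1] rank_one_term[of "- 1"]] by simp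
  moreover have "1 / 2 * ((2 + 2 * of_bool (a = c)) * (2 - 2 * of_bool (b = d)))
       + 1 / 2 * ((2 - 2 * of_bool (a = c)) * (2 + 2 * of_bool (b = d))) = (4 :: real)"
    using assms(5) by auto
  ultimately show ?thesis
    by (auto elim!: sep_combination_cong simp: arc_laplacian_swap_pair f_def g_def)
qed

lemma sep_combination_arc:
  assumes E: "simple_graph_on (grid p q) E" and "a \<in> arcs E"
  shows "sep_combination p q
    (\<lambda>X Y. complex_of_real (arc_laplacian a X Y + arc_laplacian (arc_swap a) X Y)) 4"
proof -
  obtain x1 x2 y1 y2 where a: "a = ((x1, x2), (y1, y2))"
    by (metis prod.collapse)
  have "{(x1, x2), (y1, y2)} \<in> E"
    using assms(2) a by (simp add: arcs_def)
  then have "x1 < p" "y1 < p" "x2 < q" "y2 < q" "(x1, x2) \<noteq> (y1, y2)"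
    using simple_graph_on_edgeD[OF E] unfolding grid_def by blast+
  then show ?thesis
    unfolding a arc_swap_def prod.sel by (rule sep_combination_arc_pair)
qed

lemma separable_rho_if_ptrans_B_eq:
  assumes E: "simple_graph_on (grid p q) E" and "E \<noteq> {}" and pt: "ptrans_B E = E"
  shows "separable p q (rho E)"
proof -
  have fin: "finite (arcs E)"
    using E finite_grid by (rule finite_arcs)
  have "0 < card E"
    using simple_graph_on_finite[OF E finite_grid] assms(2) by (simp add: card_gt_0_iff)
  define c where "c = 1 / (8 * real (card E))"
  have "sep_combination p q
      (\<lambda>X Y. complex_of_real c * (\<Sum>a\<in>arcs E. complex_of_real (arc_laplacian a X Y + arc_laplacian (arc_swap a) X Y)))
      (c * (\<Sum>a\<in>arcs E. 4))"
    by (intro sep_combination_scale sep_combination_sum fin sep_combination_arc[OF E]) (simp_all add: c_def)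
  moreover have "c * (\<Sum>a\<in>arcs E. 4) = 1"
    using \<open>0 < card E\<close> by (simp add: c_def card_arcs[OF E finite_grid])
  moreover have "complex_of_real c * (\<Sum>a\<in>arcs E. complex_of_real (arc_laplacian a X Y + arc_laplacian (arc_swap a) X Y))
      = rho E X Y" for X Y
  proof -
    have "(\<Sum>a\<in>arcs E. complex_of_real (arc_laplacian a X Y + arc_laplacian (arc_swap a) X Y))
        = complex_of_real (2 * (\<Sum>a\<in>arcs E. arc_laplacian a X Y))"
      unfolding of_real_sum[symmetric] sum.distrib sum_arcs_arc_swap[OF pt, of "\<lambda>a. arc_laplacian a X Y"]
      by simp
    then show ?thesis
      using \<open>0 < card E\<close> by (simp add: rho_def laplacian_eq_sum_arc_laplacian[OF fin] c_def)
  qed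
  ultimately show ?thesis
    unfolding separable_iff_sep_combination by simp
qed

theorem theorem3:
  fixes p q :: nat and E :: "vertex set set"
  assumes "nearest_point_graph p q E"
    and "E \<noteq> {}"
  shows "separable p q (rho E) \<longleftrightarrow>
         degree_matrix E = degree_matrix (ptrans_B E)"
proof -
  have E: "simple_graph_on (grid p q) E"
    using assms(1) unfolding nearest_point_graph_def by blast
  have degree_matrix_eq_iff:
    "degree_matrix E = degree_matrix (ptrans_B E) \<longleftrightarrow> (\<forall>v. degree E v = degree (ptrans_B E) v)"
    by (auto simp: fun_eq_iff degree_matrix_def)
  show ?thesis
  proof
    assume "separable p q (rho E)"
    then have "ptrans_B E = E"
      using ptrans_B_eq_if_degree_eq[OF assms(1)] degree_ptrans_B_eq_if_separable[OF E assms(2)] by blast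
    then show "degree_matrix E = degree_matrix (ptrans_B E)"
      by simp
  next
    assume "degree_matrix E = degree_matrix (ptrans_B E)"
    then have "ptrans_B E = E"
      using degree_matrix_eq_iff ptrans_B_eq_if_degree_eq[OF assms(1)] by blast
    then show "separable p q (rho E)"
      by (rule separable_rho_if_ptrans_B_eq[OF E assms(2)])
  qed
qed

end
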